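(* Let $H$ be a separable complex Hilbert space and $T:H\to H$ a hyponormal operator, i.e. $\|T^*h\|\le\|Th\|$ for every $h\in H$. If $T$ is recurrent, then $T$ is unitary.
   Context: $T$ is recurrent if for every non-empty open $U\subset H$ there is a positive integer $k$ with $U\cap T^{-k}(U)\neq\emptyset$. *)

theory Defs
  imports "HOL-Analysis.Analysis"
begin

text \<open>HOL-Analysis has no complex inner product spaces, so we introduce the
standard notion: a real normed vector space carrying a complex scalar
multiplication (compatible with the real one) and a complex inner product
(conjugate-linear in the first argument) that induces the norm.\<close>

class complex_inner = real_normed_vector +
  fixes scaleC :: "complex \<Rightarrow> 'a \<Rightarrow> 'a"
    and cinner :: "'a \<Rightarrow> 'a \<Rightarrow> complex"
  assumes scaleC_add_right: "scaleC a (x + y) = scaleC a x + scaleC a y"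
    and scaleC_add_left: "scaleC (a + b) x = scaleC a x + scaleC b x"
    and scaleC_scaleC: "scaleC a (scaleC b x) = scaleC (a * b) x"
    and scaleC_one: "scaleC 1 x = x"
    and scaleR_scaleC: "scaleR r x = scaleC (complex_of_real r) x"
    and cinner_commute: "cinner x y = cnj (cinner y x)"
    and cinner_add_left: "cinner (x + y) z = cinner x z + cinner y z"
    and cinner_scaleC_left: "cinner (scaleC a x) y = cnj a * cinner x y"
    and cinner_nonneg: "Im (cinner x x) = 0 \<and> 0 \<le> Re (cinner x x)"
    and cinner_eq_zero: "cinner x x = 0 \<longleftrightarrow> x = 0"
    and norm_cinner: "norm x = sqrt (Re (cinner x x))"

definition bounded_clinear :: "('a::complex_inner \<Rightarrow> 'b::complex_inner) \<Rightarrow> bool" where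
  "bounded_clinear T \<longleftrightarrow>
     (\<forall>x y. T (x + y) = T x + T y) \<and>
     (\<forall>a x. T (scaleC a x) = scaleC a (T x)) \<and>
     (\<exists>K. \<forall>x. norm (T x) \<le> norm x * K)"

definition is_adjoint :: "('a::complex_inner \<Rightarrow> 'a) \<Rightarrow> ('a \<Rightarrow> 'a) \<Rightarrow> bool" where
  "is_adjoint T S \<longleftrightarrow> (\<forall>x y. cinner (T x) y = cinner x (S y))"

definition adj :: "('a::complex_inner \<Rightarrow> 'a) \<Rightarrow> ('a \<Rightarrow> 'a)" where
  "adj T = (THE S. is_adjoint T S)"

definition separable :: "'a::topological_space set \<Rightarrow> bool" where
  "separable S \<longleftrightarrow> (\<exists>D. countable D \<and> D \<subseteq> S \<and> S \<subseteq> closure D)"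

definition hyponormal :: "('a::complex_inner \<Rightarrow> 'a) \<Rightarrow> bool" where
  "hyponormal T \<longleftrightarrow> (\<forall>h. norm (adj T h) \<le> norm (T h))"

definition recurrent :: "('a::topological_space \<Rightarrow> 'a) \<Rightarrow> bool" where
  "recurrent T \<longleftrightarrow>
     (\<forall>U. open U \<and> U \<noteq> {} \<longrightarrow> (\<exists>k::nat. k > 0 \<and> U \<inter> (T ^^ k) -` U \<noteq> {}))"

definition unitary :: "('a::complex_inner \<Rightarrow> 'a) \<Rightarrow> bool" where
  "unitary T \<longleftrightarrow> adj T \<circ> T = id \<and> T \<circ> adj T = id"

end

theory Submission
  imports Defs
begin

text \<open>Hyponormality and Cauchy-Schwarz give \<open>\<parallel>T x\<parallel>\<^sup>2 = \<langle>x, T\<^sup>*T x\<rangle> \<le> \<parallel>x\<parallel> \<parallel>T\<^sup>2 x\<parallel>\<close>, so along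
every orbit the ratio \<open>\<parallel>T\<^sup>k\<^sup>+\<^sup>1 y\<parallel> / \<parallel>T\<^sup>k y\<parallel>\<close> is nondecreasing. If \<open>\<parallel>T x\<parallel> > \<parallel>x\<parallel>\<close>, the
orbits starting in a small open neighbourhood of \<open>x\<close> grow by a fixed factor at every step and
never return; if \<open>\<parallel>T x\<parallel> < \<parallel>x\<parallel>\<close>, an orbit that returns must have shrunk all along. Recurrence
thus makes \<open>T\<close> an isometry; its range is complete, hence closed, and dense by recurrence, so
\<open>T\<close> is onto. Finally \<open>\<langle>T\<^sup>*T x, x\<rangle> = \<parallel>x\<parallel>\<^sup>2\<close> together with \<open>\<parallel>T\<^sup>*T x\<parallel> \<le> \<parallel>T T x\<parallel> = \<parallel>x\<parallel>\<close> forces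
\<open>T\<^sup>*T x = x\<close>. The adjoint exists by the Riesz representation theorem, proved via the
element of minimal norm in a closed convex set.\<close>

subsection \<open>Complex inner product spaces\<close>

lemma cinner_zero_left [simp]: "cinner (0::'a::complex_inner) y = 0"
  using cinner_add_left[of 0 0 y] by simp

lemma cinner_zero_right [simp]: "cinner (x::'a::complex_inner) 0 = 0"
  by (metis cinner_commute cinner_zero_left complex_cnj_zero)

lemma cinner_minus_left: "cinner (- x::'a::complex_inner) y = - cinner x y"
  using cinner_add_left[of x "- x" y] by (simp add: eq_neg_iff_add_eq_0 add.commute)

lemma cinner_diff_left: "cinner (x - z::'a::complex_inner) y = cinner x y - cinner z y"
  using cinner_add_left[of x "- z" y] cinner_minus_left[of z y] by simp

lemma cinner_add_right: "cinner (x::'a::complex_inner) (y + z) = cinner x y + cinner x z"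
  by (metis cinner_commute cinner_add_left complex_cnj_add)

lemma cinner_diff_right: "cinner (x::'a::complex_inner) (y - z) = cinner x y - cinner x z"
  by (metis cinner_commute cinner_diff_left complex_cnj_diff)

lemma cinner_scaleC_right: "cinner (x::'a::complex_inner) (scaleC a y) = a * cinner x y"
  by (metis cinner_commute cinner_scaleC_left complex_cnj_cnj complex_cnj_mult)

lemma cinner_self: "cinner (x::'a::complex_inner) x = complex_of_real ((norm x)\<^sup>2)"
  using cinner_nonneg[of x] norm_cinner[of x] by (simp add: complex_eq_iff)

lemma norm_power2_eq_Re_cinner: "(norm (x::'a::complex_inner))\<^sup>2 = Re (cinner x x)"
  by (simp add: cinner_self)

lemma cnj_mult_self: "cnj a * a = complex_of_real ((cmod a)\<^sup>2)"
  by (metis complex_norm_square mult.commute of_real_power)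

lemma norm_add_power2:
  "(norm (x + y::'a::complex_inner))\<^sup>2 = (norm x)\<^sup>2 + (norm y)\<^sup>2 + 2 * Re (cinner x y)"
proof -
  have "cinner (x + y) (x + y) = cinner x x + cinner y y + (cinner x y + cnj (cinner x y))"
    by (simp add: cinner_add_left cinner_add_right cinner_commute[of y x])
  then show ?thesis
    by (simp add: norm_power2_eq_Re_cinner)
qed

lemma norm_diff_power2:
  "(norm (x - y::'a::complex_inner))\<^sup>2 = (norm x)\<^sup>2 + (norm y)\<^sup>2 - 2 * Re (cinner x y)"
proof -
  have "cinner (x - y) (x - y) = cinner x x + cinner y y - (cinner x y + cnj (cinner x y))"
    by (simp add: cinner_diff_left cinner_diff_right cinner_commute[of y x])
  then show ?thesis
    by (simp add: norm_power2_eq_Re_cinner)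
qed

lemma parallelogram_law:
  "(norm (x + y::'a::complex_inner))\<^sup>2 + (norm (x - y))\<^sup>2 = 2 * (norm x)\<^sup>2 + 2 * (norm y)\<^sup>2"
  by (simp add: norm_add_power2 norm_diff_power2)

lemma norm_scaleC: "norm (scaleC a (x::'a::complex_inner)) = cmod a * norm x"
proof -
  have "cinner (scaleC a x) (scaleC a x) = cnj a * a * cinner x x"
    by (simp add: cinner_scaleC_left cinner_scaleC_right mult.assoc)
  also have "\<dots> = complex_of_real ((cmod a)\<^sup>2) * cinner x x"
    by (simp only: cnj_mult_self)
  finally have "cinner (scaleC a x) (scaleC a x) = complex_of_real ((cmod a)\<^sup>2) * cinner x x" .
  then have "(norm (scaleC a x))\<^sup>2 = (cmod a * norm x)\<^sup>2"
    by (simp add: norm_power2_eq_Re_cinner power_mult_distrib)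
  then show ?thesis
    by (simp add: power2_eq_iff_nonneg)
qed

lemma cauchy_schwarz: "cmod (cinner (x::'a::complex_inner) y) \<le> norm x * norm y"
proof (cases "x = 0")
  case True
  then show ?thesis by simp
next
  case False
  define c where "c = cinner x y / cinner x x"
  define z where "z = y - scaleC c x"
  have "cinner x x \<noteq> 0"
    using False cinner_eq_zero by blast
  then have "cinner x z = 0"
    by (simp add: z_def cinner_diff_right cinner_scaleC_right c_def)
  then have "cinner z (scaleC c x) = 0"
    by (metis cinner_commute cinner_scaleC_right complex_cnj_zero mult_zero_right)
  moreover have "y = z + scaleC c x"
    by (simp add: z_def)
  ultimately have "(norm y)\<^sup>2 = (norm z)\<^sup>2 + (cmod c * norm x)\<^sup>2"
    using norm_add_power2[of z "scaleC c x"] by (simp add: norm_scaleC)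
  then have "cmod c * norm x \<le> norm y"
    by (metis abs_norm_cancel le_add_same_cancel2 norm_ge_zero power2_le_imp_le zero_le_power2)
  moreover have "cmod c = cmod (cinner x y) / (norm x)\<^sup>2"
    by (simp add: c_def cinner_self norm_divide norm_power)
  ultimately show ?thesis
    using False by (simp add: power2_eq_square field_simps)
qed

lemma eq_if_cinner_eq_norm_power2:
  fixes u x :: "'a::complex_inner"
  assumes "cinner u x = complex_of_real ((norm x)\<^sup>2)" and "norm u \<le> norm x"
  shows "u = x"
proof -
  have "(norm (u - x))\<^sup>2 = (norm u)\<^sup>2 - (norm x)\<^sup>2"
    using assms(1) by (simp add: norm_diff_power2)
  also have "\<dots> \<le> 0"
    using assms(2) by (simp add: power_mono)
  finally show ?thesis
    by simp
qed

subsection \<open>The Riesz representation theorem\<close>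

lemma Cauchy_if_midpoints_bounded_below:
  fixes X :: "nat \<Rightarrow> 'a::complex_inner"
  assumes mid: "\<And>m n. 2 * d \<le> norm (X m + X n)"
    and lim: "(\<lambda>n. norm (X n)) \<longlonglongrightarrow> d"
  shows "Cauchy X"
proof (rule CauchyI)
  fix e :: real
  assume e: "0 < e"
  have d: "0 \<le> d"
    using lim by (rule tendsto_lowerbound) auto
  have "(\<lambda>n. (norm (X n))\<^sup>2) \<longlonglongrightarrow> d\<^sup>2"
    using lim by (intro tendsto_intros)
  then have "eventually (\<lambda>n. (norm (X n))\<^sup>2 < d\<^sup>2 + e\<^sup>2 / 4) sequentially"
    by (rule order_tendstoD) (use e in simp)
  then obtain N where N: "\<And>n. n \<ge> N \<Longrightarrow> (norm (X n))\<^sup>2 < d\<^sup>2 + e\<^sup>2 / 4"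
    by (auto simp: eventually_sequentially)
  have "norm (X m - X n) < e" if "m \<ge> N" "n \<ge> N" for m n
  proof -
    have "(2 * d)\<^sup>2 \<le> (norm (X m + X n))\<^sup>2"
      using mid d by (intro power_mono) auto
    then have "(norm (X m - X n))\<^sup>2 < e\<^sup>2"
      using parallelogram_law[of "X m" "X n"] N[OF that(1)] N[OF that(2)]
      by (simp add: power_mult_distrib)
    then show ?thesis
      using e by (simp add: power_less_imp_less_base)
  qed
  then show "\<exists>M. \<forall>m\<ge>M. \<forall>n\<ge>M. norm (X m - X n) < e"
    by blast
qed

lemma exists_min_norm_in_closed_convex:
  fixes A :: "'a::{complex_inner,complete_space} set"
  assumes "closed A" and "convex A" and "A \<noteq> {}"
  obtains z where "z \<in> A" and "\<And>w. w \<in> A \<Longrightarrow> norm z \<le> norm w"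
proof -
  define d where "d = Inf (norm ` A)"
  have d_le: "d \<le> norm w" if "w \<in> A" for w
    unfolding d_def using that by (intro cInf_lower bdd_belowI[of _ 0]) auto
  have "\<exists>x\<in>A. norm x < d + inverse (real (Suc n))" for n
    using cInf_lessD[of "norm ` A" "d + inverse (real (Suc n))"] \<open>A \<noteq> {}\<close>
    by (auto simp: d_def)
  then obtain X where X: "\<And>n. X n \<in> A" "\<And>n. norm (X n) < d + inverse (real (Suc n))"
    by metis
  have lim: "(\<lambda>n. norm (X n)) \<longlonglongrightarrow> d"
    by (rule tendsto_sandwich[OF _ _ tendsto_const LIMSEQ_inverse_real_of_nat_add])
       (use X d_le in \<open>auto intro!: always_eventually less_imp_le\<close>)
  have "2 * d \<le> norm (X m + X n)" for m n
  proof -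
    have "(1/2) *\<^sub>R X m + (1/2) *\<^sub>R X n \<in> A"
      using X(1) \<open>convex A\<close> by (intro convexD) auto
    then show ?thesis
      using d_le by (fastforce simp flip: scaleR_right_distrib)
  qed
  then have "Cauchy X"
    using lim by (rule Cauchy_if_midpoints_bounded_below)
  then obtain z where z: "X \<longlonglongrightarrow> z"
    using Cauchy_convergent_iff convergent_def by blast
  show ?thesis
  proof
    show "z \<in> A"
      using closed_sequentially[OF \<open>closed A\<close> _ z] X(1) by blast
    have "norm z = d"
      using tendsto_norm[OF z] lim by (rule LIMSEQ_unique)
    then show "norm z \<le> norm w" if "w \<in> A" for w
      using d_le[OF that] by simp
  qed
qed

lemma cinner_eq_0_if_norm_le_norm_add_scaleC:
  fixes z v :: "'a::complex_inner"
  assumes "\<And>t. norm z \<le> norm (z + scaleC t v)"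
  shows "cinner z v = 0"
proof (cases "v = 0")
  case True
  then show ?thesis by simp
next
  case False
  define w where "w = cinner z v"
  define t where "t = - cnj w / complex_of_real ((norm v)\<^sup>2)"
  have "(norm z)\<^sup>2 \<le> (norm (z + scaleC t v))\<^sup>2"
    using assms by (intro power_mono) auto
  also have "\<dots> = (norm z)\<^sup>2 + (cmod t * norm v)\<^sup>2 + 2 * Re (t * w)"
    by (simp add: norm_add_power2 norm_scaleC cinner_scaleC_right w_def)
  moreover have "(cmod t * norm v)\<^sup>2 + 2 * Re (t * w) = - (cmod w)\<^sup>2 / (norm v)\<^sup>2"
    using False
    by (simp add: t_def norm_divide norm_power cnj_mult_self power_divide power_mult_distrib)
       (simp add: power2_eq_square power4_eq_xxxx field_simps)
  ultimately have "(cmod w)\<^sup>2 / (norm v)\<^sup>2 \<le> 0"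
    by linarith
  then show ?thesis
    using False by (simp add: w_def divide_le_0_iff)
qed

theorem riesz_representation:
  fixes f :: "'a::{complex_inner,complete_space} \<Rightarrow> complex"
  assumes add: "\<And>x y. f (x + y) = f x + f y"
    and scale: "\<And>a x. f (scaleC a x) = a * f x"
    and bound: "\<And>x. cmod (f x) \<le> norm x * K"
  obtains z where "\<And>x. f x = cinner z x"
proof (cases "\<forall>x. f x = 0")
  case True
  then show ?thesis
    using that[of 0] by simp
next
  case False
  then obtain x0 where x0: "f x0 \<noteq> 0"
    by blast
  have scaleR: "f (r *\<^sub>R x) = r *\<^sub>R f x" for r x
    by (simp add: scaleR_scaleC scale scaleR_conv_of_real)
  have "bounded_linear f"
    by (rule bounded_linear_intro[where K = K]) (use add scaleR bound in auto)
  define A where "A = {x. f x = 1}"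
  have "closed A"
    unfolding A_def
    by (intro closed_Collect_eq continuous_intros linear_continuous_on \<open>bounded_linear f\<close>)
  moreover have "convex A"
    by (auto simp: A_def convex_def add scaleR scaleR_conv_of_real simp flip: of_real_add)
  moreover have "scaleC (inverse (f x0)) x0 \<in> A"
    using x0 by (simp add: A_def scale)
  ultimately obtain z where z: "z \<in> A" and min: "\<And>w. w \<in> A \<Longrightarrow> norm z \<le> norm w"
    using exists_min_norm_in_closed_convex by blast
  have kernel_orthogonal: "cinner z v = 0" if "f v = 0" for v
    using z that by (intro cinner_eq_0_if_norm_le_norm_add_scaleC min) (simp add: A_def add scale)
  have represent: "cinner z x = f x * complex_of_real ((norm z)\<^sup>2)" for x
  proof -
    have "f (x + scaleC (- f x) z) = 0"
      using z by (simp add: A_def add scale)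
    then have "cinner z (x + scaleC (- f x) z) = 0"
      by (rule kernel_orthogonal)
    then show ?thesis
      by (simp add: cinner_add_right cinner_scaleC_right cinner_self)
  qed
  have "z \<noteq> 0"
    using z add[of 0 0] by (auto simp: A_def)
  show ?thesis
  proof (rule that)
    fix x
    show "f x = cinner (scaleC (complex_of_real (inverse ((norm z)\<^sup>2))) z) x"
      using \<open>z \<noteq> 0\<close> by (simp add: cinner_scaleC_left represent)
  qed
qed

subsection \<open>Bounded operators and their adjoints\<close>

lemma bounded_clinear_imp_bounded_linear:
  assumes "bounded_clinear (T::'a::complex_inner \<Rightarrow> 'b::complex_inner)"
  shows "bounded_linear T"
proof -
  from assms obtain K where add: "\<And>x y. T (x + y) = T x + T y"
    and scale: "\<And>a x. T (scaleC a x) = scaleC a (T x)" and K: "\<And>x. norm (T x) \<le> norm x * K"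
    unfolding bounded_clinear_def by blast
  show ?thesis
    by (rule bounded_linear_intro[where K = K]) (use add K in \<open>auto simp: scaleR_scaleC scale\<close>)
qed

lemma is_adjoint_unique:
  assumes "is_adjoint (T::'a::complex_inner \<Rightarrow> 'a) S" and "is_adjoint T S'"
  shows "S = S'"
proof
  fix y
  have "cinner x (S y) = cinner x (S' y)" for x
    using assms by (metis is_adjoint_def)
  then have "cinner (S y - S' y) (S y - S' y) = 0"
    by (simp add: cinner_diff_right)
  then show "S y = S' y"
    by (simp add: cinner_eq_zero)
qed

lemma is_adjoint_adj:
  assumes "bounded_clinear (T::'a::{complex_inner,complete_space} \<Rightarrow> 'a)"
  shows "is_adjoint T (adj T)"
proof -
  from assms obtain K where add: "\<And>x y. T (x + y) = T x + T y"
    and scale: "\<And>a x. T (scaleC a x) = scaleC a (T x)" and K: "\<And>x. norm (T x) \<le> norm x * K"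
    unfolding bounded_clinear_def by blast
  have "\<exists>z. \<forall>x. cinner y (T x) = cinner z x" for y
  proof (rule riesz_representation[where K = "norm y * K"])
    show "cinner y (T (x + x')) = cinner y (T x) + cinner y (T x')" for x x'
      by (simp add: add cinner_add_right)
    show "cinner y (T (scaleC a x)) = a * cinner y (T x)" for a x
      by (simp add: scale cinner_scaleC_right)
    show "cmod (cinner y (T x)) \<le> norm x * (norm y * K)" for x
      using cauchy_schwarz[of y "T x"] mult_left_mono[OF K[of x] norm_ge_zero[of y]]
      by (simp add: algebra_simps)
  qed auto
  then obtain S where S: "\<And>y x. cinner y (T x) = cinner (S y) x"
    by metis
  have "is_adjoint T S"
    unfolding is_adjoint_def by (metis S cinner_commute)
  moreover from this have "adj T = S"
    unfolding adj_def by (blast intro: is_adjoint_unique)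
  ultimately show ?thesis
    by simp
qed

lemma hyponormal_norm_power2_le:
  assumes "bounded_clinear (T::'a::{complex_inner,complete_space} \<Rightarrow> 'a)" and "hyponormal T"
  shows "(norm (T x))\<^sup>2 \<le> norm x * norm (T (T x))"
proof -
  have "(norm (T x))\<^sup>2 = Re (cinner x (adj T (T x)))"
    using is_adjoint_adj[OF assms(1)] unfolding is_adjoint_def
    by (simp add: norm_power2_eq_Re_cinner)
  also have "\<dots> \<le> norm x * norm (adj T (T x))"
    using complex_Re_le_cmod cauchy_schwarz order_trans by blast
  also have "\<dots> \<le> norm x * norm (T (T x))"
    using assms(2) by (simp add: hyponormal_def mult_left_mono)
  finally show ?thesis .
qed

lemma adj_apply_apply_if_isometry:
  fixes T :: "'a::{complex_inner, complete_space} \<Rightarrow> 'a"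
  assumes "bounded_clinear T" and "hyponormal T" and isometry: "\<And>x. norm (T x) = norm x"
  shows "adj T (T x) = x"
proof (rule eq_if_cinner_eq_norm_power2)
  have "cinner x (adj T (T x)) = cinner (T x) (T x)"
    using is_adjoint_adj[OF assms(1)] by (simp add: is_adjoint_def)
  then show "cinner (adj T (T x)) x = complex_of_real ((norm x)\<^sup>2)"
    by (simp add: cinner_commute[of "adj T (T x)" x] cinner_self isometry)
  have "norm (adj T (T x)) \<le> norm (T (T x))"
    using assms(2) by (simp add: hyponormal_def)
  then show "norm (adj T (T x)) \<le> norm x"
    by (simp add: isometry)
qed

subsection \<open>Orbits of operators with \<open>\<parallel>T x\<parallel>\<^sup>2 \<le> \<parallel>x\<parallel> \<parallel>T\<^sup>2 x\<parallel>\<close>\<close>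

lemma norm_pos_if_norm_apply_pos:
  fixes T :: "'a::real_normed_vector \<Rightarrow> 'a"
  assumes "\<And>x. (norm (T x))\<^sup>2 \<le> norm x * norm (T (T x))" and "0 < norm (T x)"
  shows "0 < norm x"
proof (rule ccontr)
  assume "\<not> 0 < norm x"
  then have "(norm (T x))\<^sup>2 \<le> 0"
    using assms(1)[of x] by simp
  then show False
    using assms(2) by simp
qed

lemma norm_iterate_growth:
  fixes T :: "'a::real_normed_vector \<Rightarrow> 'a"
  assumes H: "\<And>x. (norm (T x))\<^sup>2 \<le> norm x * norm (T (T x))"
    and "0 \<le> c" and "c * norm y < norm (T y)"
  shows "c * norm ((T ^^ k) y) < norm ((T ^^ Suc k) y)"
proof (induction k)
  case 0
  then show ?case using assms(3) by simp
next
  case (Suc k)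
  define x where "x = (T ^^ k) y"
  have step: "c * norm x < norm (T x)"
    using Suc.IH by (simp add: x_def)
  then have "0 < norm (T x)"
    using mult_nonneg_nonneg[OF \<open>0 \<le> c\<close> norm_ge_zero[of x]] by linarith
  then have "0 < norm x"
    by (rule norm_pos_if_norm_apply_pos[OF H])
  have "norm x * (c * norm (T x)) < norm (T x) * norm (T x)"
    using mult_strict_right_mono[OF step \<open>0 < norm (T x)\<close>] by (simp add: algebra_simps)
  also have "\<dots> \<le> norm x * norm (T (T x))"
    using H[of x] by (simp add: power2_eq_square)
  finally have "c * norm (T x) < norm (T (T x))"
    using \<open>0 < norm x\<close> by (simp add: mult_less_cancel_left_pos)
  then show ?case
    by (simp add: x_def)
qed

lemma norm_iterate_decay:
  fixes T :: "'a::real_normed_vector \<Rightarrow> 'a"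
  assumes H: "\<And>x. (norm (T x))\<^sup>2 \<le> norm x * norm (T (T x))"
    and "0 \<le> c" and "norm ((T ^^ Suc k) y) \<le> c * norm ((T ^^ k) y)"
  shows "norm ((T ^^ k) y) \<le> c ^ k * norm y"
  using assms(3)
proof (induction k arbitrary: y)
  case 0
  then show ?case by simp
next
  case (Suc k)
  have "norm ((T ^^ Suc k) (T y)) \<le> c * norm ((T ^^ k) (T y))"
    using Suc.prems by (simp add: funpow_swap1)
  then have "norm ((T ^^ Suc k) y) \<le> c ^ k * norm (T y)"
    using Suc.IH by (simp add: funpow_swap1)
  also have "\<dots> \<le> c ^ k * (c * norm y)"
  proof (rule mult_left_mono)
    show "norm (T y) \<le> c * norm y"
    proof (rule ccontr)
      assume "\<not> norm (T y) \<le> c * norm y"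
      then have "c * norm ((T ^^ Suc k) y) < norm ((T ^^ Suc (Suc k)) y)"
        by (intro norm_iterate_growth[OF H \<open>0 \<le> c\<close>]) simp
      then show False
        using Suc.prems by simp
    qed
  qed (use \<open>0 \<le> c\<close> in simp)
  finally show ?case
    by (simp add: mult_ac)
qed

text \<open>In the two lemmas below the open set \<open>U\<close> pins the norm to an interval whose endpoints
differ by the factor \<open>c\<close>, while the orbit of every point of \<open>U\<close> changes norm by more than
that factor.\<close>

lemma norm_apply_le_if_recurrent:
  fixes T :: "'a::real_normed_vector \<Rightarrow> 'a"
  assumes "continuous_on UNIV T"
    and H: "\<And>x. (norm (T x))\<^sup>2 \<le> norm x * norm (T (T x))"
    and "recurrent T"
  shows "norm (T x) \<le> norm x"
proof (rule ccontr)
  assume "\<not> norm (T x) \<le> norm x"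
  then have "0 < norm x"
    using norm_pos_if_norm_apply_pos[OF H, of x] norm_ge_zero[of x] by linarith
  then obtain c where c: "1 < c" "c < norm (T x) / norm x"
    using \<open>\<not> norm (T x) \<le> norm x\<close> dense[of 1 "norm (T x) / norm x"] by auto
  then obtain b where b: "norm x < b" "b < c * norm x"
    using \<open>0 < norm x\<close> dense[of "norm x" "c * norm x"] by auto
  define U where "U = {y. c * norm y < norm (T y) \<and> b < c * norm y \<and> norm y < b}"
  have "open U"
    unfolding U_def
    by (intro open_Collect_conj open_Collect_less continuous_intros \<open>continuous_on UNIV T\<close>)
  moreover have "x \<in> U"
    using c b \<open>0 < norm x\<close> by (simp add: U_def field_simps)
  ultimately obtain k y where "0 < k" "y \<in> U" "(T ^^ k) y \<in> U"
    using \<open>recurrent T\<close> unfolding recurrent_def by blast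
  have "norm ((T ^^ i) y) < norm ((T ^^ Suc i) y)" for i
  proof -
    have "norm ((T ^^ i) y) \<le> c * norm ((T ^^ i) y)"
      using mult_right_mono[of 1 c "norm ((T ^^ i) y)"] c(1) by simp
    also have "\<dots> < norm ((T ^^ Suc i) y)"
      using \<open>y \<in> U\<close> c(1) by (intro norm_iterate_growth[OF H]) (auto simp: U_def)
    finally show ?thesis .
  qed
  then have "incseq (\<lambda>i. norm ((T ^^ i) y))"
    by (intro incseq_SucI less_imp_le)
  then have "norm ((T ^^ 1) y) \<le> norm ((T ^^ k) y)"
    using \<open>0 < k\<close> by (intro incseqD[where f = "\<lambda>i. norm ((T ^^ i) y)", simplified]) auto
  then show False
    using \<open>y \<in> U\<close> \<open>(T ^^ k) y \<in> U\<close> by (simp add: U_def)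
qed

lemma norm_apply_ge_if_recurrent:
  fixes T :: "'a::real_normed_vector \<Rightarrow> 'a"
  assumes "continuous_on UNIV T"
    and H: "\<And>x. (norm (T x))\<^sup>2 \<le> norm x * norm (T (T x))"
    and "recurrent T"
  shows "norm x \<le> norm (T x)"
proof (rule ccontr)
  assume "\<not> norm x \<le> norm (T x)"
  then have "0 < norm x"
    using norm_ge_zero[of "T x"] by linarith
  then obtain c where c: "norm (T x) / norm x < c" "c < 1"
    using \<open>\<not> norm x \<le> norm (T x)\<close> dense[of "norm (T x) / norm x" 1] by auto
  then have "0 < c"
    using divide_nonneg_pos[OF norm_ge_zero \<open>0 < norm x\<close>, of "T x"] by linarith
  obtain b where b: "c * norm x < b" "b < norm x"
    using c \<open>0 < norm x\<close> dense[of "c * norm x" "norm x"] by (auto simp: field_simps)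
  define U where "U = {y. norm (T y) < c * norm y \<and> b < norm y \<and> c * norm y < b}"
  have "open U"
    unfolding U_def
    by (intro open_Collect_conj open_Collect_less continuous_intros \<open>continuous_on UNIV T\<close>)
  moreover have "x \<in> U"
    using c b \<open>0 < norm x\<close> by (simp add: U_def field_simps)
  ultimately obtain k y where "0 < k" "y \<in> U" "(T ^^ k) y \<in> U"
    using \<open>recurrent T\<close> unfolding recurrent_def by blast
  have "norm ((T ^^ k) y) \<le> c ^ k * norm y"
    using \<open>(T ^^ k) y \<in> U\<close> \<open>0 < c\<close> by (intro norm_iterate_decay[OF H]) (auto simp: U_def)
  also have "\<dots> \<le> c * norm y"
    using power_decreasing[of 1 k c] \<open>0 < k\<close> \<open>0 < c\<close> c(2) by (simp add: mult_right_mono)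
  finally show False
    using \<open>y \<in> U\<close> \<open>(T ^^ k) y \<in> U\<close> by (simp add: U_def)
qed

lemma closure_range_eq_UNIV_if_recurrent:
  assumes "recurrent T"
  shows "closure (range T) = UNIV"
proof (rule ccontr)
  assume "closure (range T) \<noteq> UNIV"
  define U where "U = - closure (range T)"
  have "open U" and "U \<noteq> {}"
    unfolding U_def using \<open>closure (range T) \<noteq> UNIV\<close> by auto
  then obtain k where "0 < k" and "U \<inter> (T ^^ k) -` U \<noteq> {}"
    using \<open>recurrent T\<close> unfolding recurrent_def by blast
  then obtain j y where "k = Suc j" and "(T ^^ k) y \<in> U"
    using gr0_implies_Suc by blast
  moreover have "(T ^^ Suc j) y \<in> closure (range T)"
    using closure_subset by (metis comp_apply funpow.simps(2) rangeI subsetD)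
  ultimately show False
    by (simp add: U_def)
qed

lemma surj_if_isometry_dense_range:
  fixes T :: "'a::{real_normed_vector,complete_space} \<Rightarrow> 'b::real_normed_vector"
  assumes "bounded_linear T" and "\<And>x. norm (T x) = norm x"
    and "closure (range T) = UNIV"
  shows "surj T"
proof -
  have "complete (range T)"
    by (rule complete_isometric_image[of 1]) (use assms in \<open>auto simp: complete_UNIV\<close>)
  then show ?thesis
    using assms(3) complete_imp_closed closure_closed by metis
qed

theorem proposition8p3:
  fixes T :: "'a::{complex_inner, complete_space} \<Rightarrow> 'a"
  assumes "separable (UNIV :: 'a set)"
    and "bounded_clinear T"
    and "hyponormal T"
    and "recurrent T"
  shows "unitary T"
proof -
  have "bounded_linear T"
    using assms(2) by (rule bounded_clinear_imp_bounded_linear)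
  then have cont: "continuous_on UNIV T"
    by (rule linear_continuous_on)
  note H = hyponormal_norm_power2_le[OF assms(2,3)]
  have isometry: "norm (T x) = norm x" for x
    using norm_apply_le_if_recurrent[OF cont H assms(4)]
      norm_apply_ge_if_recurrent[OF cont H assms(4)] by (simp add: order_antisym)
  have "surj T"
    using \<open>bounded_linear T\<close> isometry closure_range_eq_UNIV_if_recurrent[OF assms(4)]
    by (rule surj_if_isometry_dense_range)
  have adj_T: "adj T (T x) = x" for x
    using assms(2,3) isometry by (rule adj_apply_apply_if_isometry)
  have "T (adj T y) = y" for y
    using \<open>surj T\<close> adj_T by (metis surjD)
  then show ?thesis
    by (simp add: unitary_def fun_eq_iff adj_T)
qed

end
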